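(* Let $T_1=(V_1,E_1)$ and $T_2=(V_2,E_2)$ be trees with $|V_1|=|V_2|=n$. Suppose there exist labelings $\mathcal{L}_1,\mathcal{L}_2$ and edge orderings $\pi_1,\pi_2$ of $T_1,T_2$ respectively, and an element $\sigma\in S_n$, such that $$\sigma\,\mathcal{K}_{\mathcal{L}_1,\pi_1}(T_1)\,\sigma^{-1}=\mathcal{K}_{\mathcal{L}_2,\pi_2}(T_2).$$ Then $T_1$ and $T_2$ are isomorphic.
   Context: $\mathbb{C}[S_n]$ is the group algebra of the symmetric group $S_n$. A labeling of a graph $G=(V,E)$ with $|V|=n$ is a bijection $\mathcal{L}:V\to\{1,\dots,n\}$; under it an edge $\{u,v\}$ corresponds to the transposition $(\mathcal{L}(u)\,\mathcal{L}(v))\in S_n$. For a labeling $\mathcal{L}$ and an ordering $\pi=(e_1,\dots,e_m)$ of $E$, $\mathcal{K}_{\mathcal{L},\pi}(G)=n!\,(1-t_1)(1-t_2)\cdots(1-t_m)\in\mathbb{C}[S_n]$, where $t_r$ is the transposition corresponding to $e_r$ under $\mathcal{L}$ and the product is in the order of $\pi$. *)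

theory Defs
  imports Complex_Main "HOL-Combinatorics.Permutations" "HOL-Combinatorics.Transposition"
begin

definition simple_graph :: "'a set \<Rightarrow> 'a set set \<Rightarrow> bool" where
  "simple_graph V E \<longleftrightarrow> finite V \<and> (\<forall>e\<in>E. \<exists>u v. e = {u, v} \<and> u \<noteq> v \<and> u \<in> V \<and> v \<in> V)"

definition adj :: "'a set set \<Rightarrow> 'a \<Rightarrow> 'a \<Rightarrow> bool" where
  "adj E u v \<longleftrightarrow> {u, v} \<in> E"

definition connected_graph :: "'a set \<Rightarrow> 'a set set \<Rightarrow> bool" where
  "connected_graph V E \<longleftrightarrow> (\<forall>u\<in>V. \<forall>v\<in>V. (u, v) \<in> {(x, y). adj E x y}\<^sup>*)"

definition is_cycle :: "'a set \<Rightarrow> 'a set set \<Rightarrow> 'a list \<Rightarrow> bool" where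
  "is_cycle V E cs \<longleftrightarrow> length cs \<ge> 3 \<and> distinct cs \<and> set cs \<subseteq> V \<and>
     (\<forall>i < length cs - 1. adj E (cs ! i) (cs ! Suc i)) \<and> adj E (last cs) (hd cs)"

definition acyclic_graph :: "'a set \<Rightarrow> 'a set set \<Rightarrow> bool" where
  "acyclic_graph V E \<longleftrightarrow> \<not> (\<exists>cs. is_cycle V E cs)"

definition is_tree :: "'a set \<Rightarrow> 'a set set \<Rightarrow> bool" where
  "is_tree V E \<longleftrightarrow> simple_graph V E \<and> V \<noteq> {} \<and> connected_graph V E \<and> acyclic_graph V E"

definition graph_iso :: "'a set \<Rightarrow> 'a set set \<Rightarrow> 'b set \<Rightarrow> 'b set set \<Rightarrow> bool" where
  "graph_iso V1 E1 V2 E2 \<longleftrightarrow> (\<exists>f. bij_betw f V1 V2 \<and>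
     (\<forall>u\<in>V1. \<forall>v\<in>V1. ({u, v} \<in> E1 \<longleftrightarrow> {f u, f v} \<in> E2)))"

text \<open>S_n is the set of permutations of {1..n} (functions nat => nat fixing everything
  outside {1..n}); the product of permutations is composition (p * q = p o q).
  An element of C[S_n] is a function S_n -> C, represented as a function on all
  nat => nat which vanishes outside S_n.\<close>

type_synonym galg = "(nat \<Rightarrow> nat) \<Rightarrow> complex"

definition Sn :: "nat \<Rightarrow> (nat \<Rightarrow> nat) set" where
  "Sn n = {p. p permutes {1..n}}"

definition ga_of :: "nat \<Rightarrow> (nat \<Rightarrow> nat) \<Rightarrow> galg" where
  "ga_of n g = (\<lambda>p. if p \<in> Sn n \<and> p = g then 1 else 0)"

definition ga_one :: "nat \<Rightarrow> galg" where
  "ga_one n = ga_of n id"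

definition ga_add :: "nat \<Rightarrow> galg \<Rightarrow> galg \<Rightarrow> galg" where
  "ga_add n a b = (\<lambda>p. if p \<in> Sn n then a p + b p else 0)"

definition ga_scale :: "nat \<Rightarrow> complex \<Rightarrow> galg \<Rightarrow> galg" where
  "ga_scale n c a = (\<lambda>p. if p \<in> Sn n then c * a p else 0)"

definition ga_mult :: "nat \<Rightarrow> galg \<Rightarrow> galg \<Rightarrow> galg" where
  "ga_mult n a b = (\<lambda>g. if g \<in> Sn n then (\<Sum>h\<in>Sn n. a h * b (inv h \<circ> g)) else 0)"

definition edge_transp :: "('a \<Rightarrow> nat) \<Rightarrow> 'a set \<Rightarrow> (nat \<Rightarrow> nat)" where
  "edge_transp L e = (THE t. \<exists>u v. e = {u, v} \<and> t = transpose (L u) (L v))"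

fun prod_one_minus :: "nat \<Rightarrow> ('a \<Rightarrow> nat) \<Rightarrow> 'a set list \<Rightarrow> galg" where
  "prod_one_minus n L [] = ga_one n"
| "prod_one_minus n L (e # es) =
     ga_mult n (ga_add n (ga_one n) (ga_scale n (-1) (ga_of n (edge_transp L e))))
               (prod_one_minus n L es)"

definition K_elem :: "nat \<Rightarrow> ('a \<Rightarrow> nat) \<Rightarrow> 'a set list \<Rightarrow> galg" where
  "K_elem n L \<pi> = ga_scale n (of_nat (fact n)) (prod_one_minus n L \<pi>)"

definition is_labeling :: "'a set \<Rightarrow> nat \<Rightarrow> ('a \<Rightarrow> nat) \<Rightarrow> bool" where
  "is_labeling V n L \<longleftrightarrow> bij_betw L V {1..n}"

definition is_edge_ordering :: "'a set set \<Rightarrow> 'a set list \<Rightarrow> bool" where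
  "is_edge_ordering E \<pi> \<longleftrightarrow> distinct \<pi> \<and> set \<pi> = E"

end

(*
  Expanding (1 - t_1)...(1 - t_m) gives the sum over subsequences s of the edge list of
  (-1)^|s| times the product of the transpositions in s.  For the edges of a tree, a product
  of distinct edge transpositions moves every end point of its edges, so it is a transposition
  only if s is a single edge.  Hence the coefficient of a transposition (a b) in K is -n! or 0
  according as {a, b} is a labelled edge or not.  Conjugation by sigma maps the coefficient of
  (a b) in K(T_1) to that of (sigma a, sigma b) in K(T_2), so L_2^-1 o sigma o L_1 is an
  isomorphism.
*)

theory Submission
  imports Defs "HOL-Library.Sublist" "HOL-Library.Transitive_Closure_Table"
begin

lemma finite_Sn: "finite (Sn n)"
  by (simp add: Sn_def finite_permutations)

lemma ga_mult_of_left: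
  assumes "s \<in> Sn n"
  shows "ga_mult n (ga_of n s) a g = (if g \<in> Sn n then a (inv s \<circ> g) else 0)"
proof -
  have "(\<Sum>h\<in>Sn n. ga_of n s h * a (inv h \<circ> g)) = (\<Sum>h\<in>Sn n. if h = s then a (inv h \<circ> g) else 0)"
    by (rule sum.cong) (auto simp: ga_of_def)
  also have "\<dots> = a (inv s \<circ> g)"
    using finite_Sn assms by (simp add: sum.delta)
  finally show ?thesis by (simp add: ga_mult_def)
qed

lemma permutes_inv_comp_eq_iff:
  assumes "h permutes S" "s permutes S"
  shows "inv h \<circ> g = s \<longleftrightarrow> h = g \<circ> inv s"
proof
  assume "inv h \<circ> g = s"
  then have "g = h \<circ> s"
    using permutes_inv_o(1)[OF assms(1)] by (metis comp_assoc id_comp)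
  then show "h = g \<circ> inv s"
    using permutes_inv_o(1)[OF assms(2)] by (simp add: comp_assoc)
next
  assume "h = g \<circ> inv s"
  then have "g = h \<circ> s"
    using permutes_inv_o(2)[OF assms(2)] by (simp add: comp_assoc)
  then show "inv h \<circ> g = s"
    using permutes_inv_o(2)[OF assms(1)] by (simp add: comp_assoc[symmetric])
qed

lemma ga_mult_of_right:
  assumes "s \<in> Sn n" "g \<in> Sn n"
  shows "ga_mult n b (ga_of n s) g = b (g \<circ> inv s)"
proof -
  have perms: "s permutes {1..n}" "g permutes {1..n}"
    using assms by (simp_all add: Sn_def)
  have "(\<Sum>h\<in>Sn n. b h * ga_of n s (inv h \<circ> g)) = (\<Sum>h\<in>Sn n. if h = g \<circ> inv s then b h else 0)"
  proof (rule sum.cong)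
    fix h assume "h \<in> Sn n"
    moreover have "ga_of n s p = (if p = s then 1 else 0)" for p
      using assms(1) by (simp add: ga_of_def)
    ultimately show "b h * ga_of n s (inv h \<circ> g) = (if h = g \<circ> inv s then b h else 0)"
      using permutes_inv_comp_eq_iff[OF _ perms(1)] by (simp add: Sn_def)
  qed simp
  also have "\<dots> = b (g \<circ> inv s)"
    using finite_Sn perms by (simp add: sum.delta Sn_def permutes_compose permutes_inv)
  finally show ?thesis
    using assms by (simp add: ga_mult_def)
qed

lemma ga_conj_apply:
  assumes "\<sigma> \<in> Sn n" "g \<in> Sn n"
  shows "ga_mult n (ga_mult n (ga_of n \<sigma>) a) (ga_of n (inv \<sigma>)) g = a (inv \<sigma> \<circ> g \<circ> \<sigma>)"
proof -
  have "inv \<sigma> \<in> Sn n" "inv (inv \<sigma>) = \<sigma>" "g \<circ> \<sigma> \<in> Sn n"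
    using assms by (simp_all add: Sn_def permutes_inv permutes_inv_inv permutes_compose)
  then show ?thesis
    using ga_mult_of_right[of "inv \<sigma>" n g] ga_mult_of_left[OF assms(1)] assms(2)
    by (simp add: o_assoc)
qed

lemma inv_comp_transpose_comp:
  assumes "bij \<sigma>"
  shows "inv \<sigma> \<circ> transpose (\<sigma> a) (\<sigma> b) \<circ> \<sigma> = transpose a b"
proof -
  have "transpose (\<sigma> a) (\<sigma> b) \<circ> \<sigma> = \<sigma> \<circ> transpose a b"
    using transpose_comp_eq[OF assms] assms by (simp add: bij_is_inj)
  then have "inv \<sigma> \<circ> transpose (\<sigma> a) (\<sigma> b) \<circ> \<sigma> = (inv \<sigma> \<circ> \<sigma>) \<circ> transpose a b"
    by (simp add: comp_assoc)
  then show ?thesis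
    using assms by (simp add: inv_o_cancel bij_is_inj)
qed

lemma transpose_eq_imp_doubleton_eq:
  assumes "a \<noteq> b" "transpose a b = transpose c d"
  shows "{a, b} = {c, d}"
proof -
  have "transpose c d a = b"
    using fun_cong[OF assms(2), of a] by simp
  then show ?thesis
    using assms(1) by (auto simp: transpose_eq_iff)
qed

section \<open>Expanding a product of factors \<open>1 - t\<close>\<close>

definition transp_prod :: "('e \<Rightarrow> 'v \<Rightarrow> 'v) \<Rightarrow> 'e list \<Rightarrow> 'v \<Rightarrow> 'v" where
  "transp_prod \<tau> s = foldr (\<lambda>e p. \<tau> e \<circ> p) s id"

definition expansion_coeff :: "('e \<Rightarrow> nat \<Rightarrow> nat) \<Rightarrow> 'e list \<Rightarrow> (nat \<Rightarrow> nat) \<Rightarrow> int" where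
  "expansion_coeff \<tau> es g = (\<Sum>s\<leftarrow>subseqs es. if transp_prod \<tau> s = g then (-1) ^ length s else 0)"

lemma expansion_coeff_Cons:
  assumes "\<tau> e \<circ> \<tau> e = id"
  shows "expansion_coeff \<tau> (e # es) g = expansion_coeff \<tau> es g - expansion_coeff \<tau> es (\<tau> e \<circ> g)"
proof -
  have "transp_prod \<tau> (e # s) = g \<longleftrightarrow> transp_prod \<tau> s = \<tau> e \<circ> g" for s
    using assms by (auto simp: transp_prod_def comp_assoc[symmetric])
  then have "(if transp_prod \<tau> (e # s) = g then (-1::int) ^ length (e # s) else 0)
      = - (if transp_prod \<tau> s = \<tau> e \<circ> g then (-1) ^ length s else 0)" for s
    by simp
  then show ?thesis
    by (simp add: expansion_coeff_def Let_def uminus_sum_list_map o_def)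
qed

lemma prod_one_minus_eq_expansion_coeff:
  assumes "\<forall>e\<in>set es. \<exists>a b. a \<noteq> b \<and> a \<in> {1..n} \<and> b \<in> {1..n} \<and> edge_transp L e = transpose a b"
    and "g \<in> Sn n"
  shows "prod_one_minus n L es g = of_int (expansion_coeff (edge_transp L) es g)"
  using assms
proof (induction es arbitrary: g)
  case Nil
  then show ?case
    by (simp add: ga_one_def ga_of_def expansion_coeff_def transp_prod_def)
next
  case (Cons e es)
  then obtain a b where ab: "a \<noteq> b" "a \<in> {1..n}" "b \<in> {1..n}" "edge_transp L e = transpose a b"
    by auto
  define t where "t = transpose a b"
  have t: "t \<in> Sn n" "t \<noteq> id" "t \<circ> g \<in> Sn n"
    using ab Cons.prems(2)
    by (simp_all add: Sn_def t_def permutes_swap_id permutes_compose transpose_eq_id_iff)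
  have "prod_one_minus n L (e # es) g =
      (\<Sum>h\<in>Sn n. (if h = id then prod_one_minus n L es (inv h \<circ> g) else 0)
               - (if h = t then prod_one_minus n L es (inv h \<circ> g) else 0))"
    using Cons.prems(2) ab(4)
    by (auto simp: ga_mult_def ga_add_def ga_one_def ga_scale_def ga_of_def t_def[symmetric]
        left_diff_distrib intro!: sum.cong)
  also have "\<dots> = prod_one_minus n L es g - prod_one_minus n L es (t \<circ> g)"
    using finite_Sn t permutes_id[of "{1..n}"] by (simp add: sum_subtractf sum.delta t_def Sn_def)
  finally show ?case
    using Cons t ab(4) expansion_coeff_Cons[of "edge_transp L" e] by (simp add: t_def)
qed

section \<open>Products of the edge transpositions of a forest\<close>

text \<open>A multigraph with edge set \<open>E\<close> and end point maps \<open>A\<close>, \<open>B\<close>; it is a forest iff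
  every edge is a bridge.\<close>

definition edge_rel :: "('e \<Rightarrow> 'v) \<Rightarrow> ('e \<Rightarrow> 'v) \<Rightarrow> 'e set \<Rightarrow> 'v \<Rightarrow> 'v \<Rightarrow> bool" where
  "edge_rel A B F x y \<longleftrightarrow> (\<exists>f\<in>F. {x, y} = {A f, B f})"

definition is_forest :: "('e \<Rightarrow> 'v) \<Rightarrow> ('e \<Rightarrow> 'v) \<Rightarrow> 'e set \<Rightarrow> bool" where
  "is_forest A B E \<longleftrightarrow> (\<forall>e\<in>E. A e \<noteq> B e \<and> \<not> (edge_rel A B (E - {e}))\<^sup>*\<^sup>* (A e) (B e))"

lemma symp_edge_rel: "symp (edge_rel A B F)"
  by (auto intro!: sympI simp: edge_rel_def insert_commute)

lemma rtranclp_edge_rel_sym: "(edge_rel A B F)\<^sup>*\<^sup>* x y \<Longrightarrow> (edge_rel A B F)\<^sup>*\<^sup>* y x"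
  using sympD[OF symp_rtranclp[OF symp_edge_rel]] .

lemma rtranclp_edge_rel_mono: "F \<subseteq> G \<Longrightarrow> (edge_rel A B F)\<^sup>*\<^sup>* x y \<Longrightarrow> (edge_rel A B G)\<^sup>*\<^sup>* x y"
  by (erule rtranclp_mono[THEN predicate2D, rotated]) (unfold edge_rel_def, blast)

lemma transp_prod_connects:
  assumes "\<forall>e\<in>set s. \<tau> e = transpose (A e) (B e)"
  shows "(edge_rel A B (set s))\<^sup>*\<^sup>* x (transp_prod \<tau> s x)"
  using assms
proof (induction s)
  case Nil
  then show ?case by (simp add: transp_prod_def)
next
  case (Cons e s)
  define y where "y = transp_prod \<tau> s x"
  have "(edge_rel A B (set (e # s)))\<^sup>*\<^sup>* x y"
    using Cons by (auto simp: y_def intro: rtranclp_edge_rel_mono[rotated])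
  moreover have "(edge_rel A B (set (e # s)))\<^sup>*\<^sup>* y (transpose (A e) (B e) y)"
    by (cases "y = A e \<or> y = B e") (auto simp: edge_rel_def insert_commute)
  ultimately show ?case
    using Cons.prems by (simp add: transp_prod_def y_def[unfolded transp_prod_def])
qed

text \<open>A product of distinct edge transpositions of a forest moves every end point of its
  edges: the last factor that touches an end point \<open>x\<close> sends it along an edge, and it could
  only come back through a path avoiding that edge.\<close>

lemma transp_prod_moves_endpoints:
  assumes "distinct s" "set s \<subseteq> E" "is_forest A B E"
    and "\<forall>e\<in>E. \<tau> e = transpose (A e) (B e)"
  shows "\<forall>e\<in>set s. \<forall>x\<in>{A e, B e}. transp_prod \<tau> s x \<noteq> x"
  using assms(1,2)
proof (induction s)
  case Nil
  then show ?case by simp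
next
  case (Cons e s)
  define a b q where "a = A e" and "b = B e" and "q = transp_prod \<tau> s"
  have e: "e \<in> E" and s: "set s \<subseteq> E - {e}"
    using Cons.prems by auto
  have "\<not> (edge_rel A B (E - {e}))\<^sup>*\<^sup>* a b"
    using assms(3) e unfolding is_forest_def a_def b_def by blast
  then have no_path: "\<not> (edge_rel A B (set s))\<^sup>*\<^sup>* a b" "\<not> (edge_rel A B (set s))\<^sup>*\<^sup>* b a"
    using rtranclp_edge_rel_mono[OF s, of A B a b] rtranclp_edge_rel_sym[of A B "set s" b a] by blast+
  have "\<forall>f\<in>set s. \<tau> f = transpose (A f) (B f)"
    using assms(4) Cons.prems(2) by auto
  then have path: "(edge_rel A B (set s))\<^sup>*\<^sup>* x (q x)" for x
    unfolding q_def by (rule transp_prod_connects)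
  have IH: "\<forall>f\<in>set s. \<forall>x\<in>{A f, B f}. q x \<noteq> x"
    using Cons by (simp add: q_def)
  have "transpose a b (q x) \<noteq> x" if x: "x \<in> {a, b} \<or> (\<exists>f\<in>set s. x \<in> {A f, B f})" for x
  proof
    assume fixed: "transpose a b (q x) = x"
    consider "q x = a" | "q x = b" | "q x \<noteq> a" "q x \<noteq> b"
      by blast
    then show False
    proof cases
      case 1
      then show False
        using fixed path[of x] no_path(2) by simp
    next
      case 2
      then show False
        using fixed path[of x] no_path(1) by simp
    next
      case 3
      then show False
        using fixed x IH by auto
    qed
  qed
  moreover have "transp_prod \<tau> (e # s) = transpose a b \<circ> q"
    using assms(4) e by (simp add: transp_prod_def a_def b_def q_def)
  ultimately show ?case
    by (auto simp: a_def b_def)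
qed

lemma transp_prod_eq_transpose_imp_singleton:
  assumes "distinct s" "set s \<subseteq> E" "is_forest A B E"
    and "\<forall>e\<in>E. \<tau> e = transpose (A e) (B e)"
    and "transp_prod \<tau> s = transpose u v" "u \<noteq> v"
  shows "length s = 1"
proof -
  have moved: "\<forall>e\<in>set s. {A e, B e} \<subseteq> {u, v}"
    using transp_prod_moves_endpoints[OF assms(1-4)] assms(5) by (auto simp: transpose_eq_iff)
  have ends_eq: "{A e, B e} = {u, v}" if "e \<in> set s" for e
  proof -
    have "A e \<noteq> B e"
      using that assms(2,3) by (auto simp: is_forest_def)
    then show ?thesis
      using moved that by auto
  qed
  have "s \<noteq> []"
    using assms(5,6) transpose_eq_id_iff[of u v] by (auto simp: transp_prod_def)
  moreover have False if "e1 \<in> set s" "e2 \<in> set s" "e1 \<noteq> e2" for e1 e2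
  proof -
    have "{A e1, B e1} = {A e2, B e2}"
      using ends_eq that by simp
    then have "edge_rel A B (E - {e1}) (A e1) (B e1)"
      using that assms(2) by (auto simp: edge_rel_def)
    then show False
      using that assms(2,3) by (auto simp: is_forest_def)
  qed
  ultimately show ?thesis
    using assms(1) by (cases s rule: remdups_adj.cases) auto
qed

text \<open>Only single edges contribute to the coefficient of a transposition, each with sign
  \<open>-1\<close>, so there is no cancellation.\<close>

lemma expansion_coeff_transpose_nonzero_iff:
  assumes "is_forest A B E" "distinct \<pi>" "set \<pi> = E"
    and "\<forall>e\<in>E. \<tau> e = transpose (A e) (B e)" "a \<noteq> b"
  shows "expansion_coeff \<tau> \<pi> (transpose a b) \<noteq> 0 \<longleftrightarrow> (\<exists>e\<in>E. \<tau> e = transpose a b)"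
proof -
  let ?term = "\<lambda>s. if transp_prod \<tau> s = transpose a b then (-1::int) ^ length s else 0"
  have sub: "distinct s \<and> set s \<subseteq> E" if "s \<in> set (subseqs \<pi>)" for s
    using that subseqs_distinctD[OF that assms(2)] subseqs_powset[of \<pi>] assms(3) by blast
  have singleton: "length s = 1" if "s \<in> set (subseqs \<pi>)" "transp_prod \<tau> s = transpose a b" for s
    using transp_prod_eq_transpose_imp_singleton[of s E A B \<tau> a b] sub[OF that(1)] that(2) assms
    by blast
  then have "(\<Sum>s\<leftarrow>subseqs \<pi>. - ?term s) = 0 \<longleftrightarrow> (\<forall>s\<in>set (subseqs \<pi>). ?term s = 0)"
    by (subst sum_list_nonneg_eq_0_iff) (auto simp del: in_set_subseqs)
  moreover have "expansion_coeff \<tau> \<pi> (transpose a b) = - (\<Sum>s\<leftarrow>subseqs \<pi>. - ?term s)"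
    by (simp add: expansion_coeff_def uminus_sum_list_map o_def)
  ultimately have "expansion_coeff \<tau> \<pi> (transpose a b) \<noteq> 0 \<longleftrightarrow> (\<exists>s\<in>set (subseqs \<pi>). ?term s \<noteq> 0)"
    by (simp del: in_set_subseqs)
  also have "\<dots> \<longleftrightarrow> (\<exists>s\<in>set (subseqs \<pi>). transp_prod \<tau> s = transpose a b)"
    by simp
  also have "\<dots> \<longleftrightarrow> (\<exists>e\<in>E. \<tau> e = transpose a b)"
  proof
    assume "\<exists>s\<in>set (subseqs \<pi>). transp_prod \<tau> s = transpose a b"
    then obtain s where s: "s \<in> set (subseqs \<pi>)" "transp_prod \<tau> s = transpose a b"
      by blast
    then have "length s = 1" "set s \<subseteq> E"
      using singleton sub by blast+
    then obtain e where "s = [e]" "e \<in> E"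
      by (auto simp: length_Suc_conv)
    then show "\<exists>e\<in>E. \<tau> e = transpose a b"
      using s(2) by (auto simp: transp_prod_def)
  next
    assume "\<exists>e\<in>E. \<tau> e = transpose a b"
    then obtain e where "e \<in> E" "\<tau> e = transpose a b"
      by blast
    then show "\<exists>s\<in>set (subseqs \<pi>). transp_prod \<tau> s = transpose a b"
      using assms(3) by (intro bexI[of _ "[e]"]) (auto simp: transp_prod_def subseq_singleton_left)
  qed
  finally show ?thesis .
qed

lemma simple_graph_obtain_ends:
  assumes "simple_graph V E"
  obtains A B where "\<forall>e\<in>E. {A e, B e} = e \<and> A e \<noteq> B e \<and> A e \<in> V \<and> B e \<in> V"
proof -
  have "\<forall>e\<in>E. \<exists>p. {fst p, snd p} = e \<and> fst p \<noteq> snd p \<and> fst p \<in> V \<and> snd p \<in> V"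
  proof
    fix e assume "e \<in> E"
    then obtain u v where "e = {u, v}" "u \<noteq> v" "u \<in> V" "v \<in> V"
      using assms unfolding simple_graph_def by blast
    then show "\<exists>p. {fst p, snd p} = e \<and> fst p \<noteq> snd p \<and> fst p \<in> V \<and> snd p \<in> V"
      by (intro exI[of _ "(u, v)"]) simp
  qed
  then obtain p where "\<forall>e\<in>E. {fst (p e), snd (p e)} = e \<and> fst (p e) \<noteq> snd (p e) \<and>
      fst (p e) \<in> V \<and> snd (p e) \<in> V"
    by (rule bchoice[elim_format]) blast
  then show thesis
    by (intro that[of "fst \<circ> p" "snd \<circ> p"]) simp
qed

lemma simple_graph_edge_in_vertices:
  assumes "simple_graph V E" "{x, y} \<in> E"
  shows "x \<in> V" "y \<in> V"
proof -
  obtain a b where "{x, y} = {a, b}" "a \<in> V" "b \<in> V"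
    using assms unfolding simple_graph_def by blast
  then show "x \<in> V" "y \<in> V"
    by (auto simp: doubleton_eq_iff)
qed

lemma cycle_of_path_avoiding_edge:
  assumes sg: "simple_graph V E" and uv: "{u, v} \<in> E" "u \<noteq> v"
    and xs: "rtrancl_path (\<lambda>x y. {x, y} \<in> E - {{u, v}}) u xs v" "distinct (u # xs)"
  shows "is_cycle V E (u # xs)"
proof -
  have "xs \<noteq> []"
  proof
    assume "xs = []"
    with xs(1) have "rtrancl_path (\<lambda>x y. {x, y} \<in> E - {{u, v}}) u [] v"
      by simp
    then have "u = v"
      by (auto elim: rtrancl_path.cases)
    with uv(2) show False ..
  qed
  then have last: "last xs = v"
    by (rule rtrancl_path_last[OF xs(1)])
  have "xs \<noteq> [v]"
    using rtrancl_path_nth[OF xs(1), of 0] by auto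
  with \<open>xs \<noteq> []\<close> last have "length (u # xs) \<ge> 3"
    by (cases xs rule: remdups_adj.cases) auto
  moreover have "set (u # xs) \<subseteq> V"
  proof -
    have "z \<in> V" if z: "z \<in> set xs" for z
    proof -
      obtain w where "{w, z} \<in> E"
        using rtrancl_path_Range[OF xs(1) z] by auto
      then show ?thesis
        by (rule simple_graph_edge_in_vertices(2)[OF sg])
    qed
    then show ?thesis
      using simple_graph_edge_in_vertices(1)[OF sg uv(1)] by auto
  qed
  moreover have "adj E ((u # xs) ! i) ((u # xs) ! Suc i)" if "i < length (u # xs) - 1" for i
    using rtrancl_path_nth[OF xs(1), of i] that by (simp add: adj_def)
  moreover have "adj E (last (u # xs)) (hd (u # xs))"
    using last \<open>xs \<noteq> []\<close> uv(1) by (simp add: adj_def insert_commute)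
  ultimately show ?thesis
    using xs(2) by (simp add: is_cycle_def)
qed

lemma tree_edge_is_bridge:
  assumes "is_tree V E" "{u, v} \<in> E" "u \<noteq> v"
  shows "\<not> (\<lambda>x y. {x, y} \<in> E - {{u, v}})\<^sup>*\<^sup>* u v"
proof
  let ?R = "\<lambda>x y. {x, y} \<in> E - {{u, v}}"
  assume "?R\<^sup>*\<^sup>* u v"
  then obtain ys where "rtrancl_path ?R u ys v"
    by (auto simp: rtranclp_eq_rtrancl_path)
  then obtain xs where "rtrancl_path ?R u xs v" "distinct (u # xs)"
    by (rule rtrancl_path_distinct) blast
  moreover have "simple_graph V E"
    using assms(1) by (simp add: is_tree_def)
  ultimately have "is_cycle V E (u # xs)"
    using assms(2,3) by (intro cycle_of_path_avoiding_edge)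
  then show False
    using assms(1) by (auto simp: is_tree_def acyclic_graph_def)
qed

lemma tree_is_forest:
  assumes "is_tree V E" "\<forall>e\<in>E. {A e, B e} = e \<and> A e \<noteq> B e"
  shows "is_forest A B E"
  unfolding is_forest_def
proof
  fix e assume e: "e \<in> E"
  have "edge_rel A B (E - {e}) = (\<lambda>x y. {x, y} \<in> E - {e})"
    using assms(2) by (fastforce simp: edge_rel_def)
  moreover have "{A e, B e} \<in> E" "A e \<noteq> B e" "{A e, B e} = e"
    using assms(2) e by auto
  ultimately show "A e \<noteq> B e \<and> \<not> (edge_rel A B (E - {e}))\<^sup>*\<^sup>* (A e) (B e)"
    using tree_edge_is_bridge[OF assms(1), of "A e" "B e"] by simp
qed

lemma rtranclp_edge_rel_comp_lift:
  assumes "inj_on L V" "\<forall>f\<in>F. A f \<in> V \<and> B f \<in> V" "x \<in> V"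
    and "(edge_rel (L \<circ> A) (L \<circ> B) F)\<^sup>*\<^sup>* (L x) q"
  shows "\<exists>y\<in>V. q = L y \<and> (edge_rel A B F)\<^sup>*\<^sup>* x y"
  using assms(4)
proof (induction rule: rtranclp_induct)
  case base
  then show ?case using assms(3) by blast
next
  case (step q r)
  then obtain y where y: "y \<in> V" "q = L y" "(edge_rel A B F)\<^sup>*\<^sup>* x y"
    by blast
  obtain f where f: "f \<in> F" "{q, r} = {L (A f), L (B f)}"
    using step(2) by (auto simp: edge_rel_def)
  have ends: "A f \<in> V" "B f \<in> V" "edge_rel A B F (A f) (B f)" "edge_rel A B F (B f) (A f)"
    using f(1) assms(2) by (auto simp: edge_rel_def insert_commute)
  have "(y = A f \<and> r = L (B f)) \<or> (y = B f \<and> r = L (A f))"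
    using f(2) assms(1) y(1,2) ends(1,2) by (auto simp: doubleton_eq_iff inj_on_eq_iff)
  then show ?case
  proof
    assume "y = A f \<and> r = L (B f)"
    then show ?case
      using y(3) ends(2,3) by (blast intro: rtranclp.rtrancl_into_rtrancl)
  next
    assume "y = B f \<and> r = L (A f)"
    then show ?case
      using y(3) ends(1,4) by (blast intro: rtranclp.rtrancl_into_rtrancl)
  qed
qed

lemma is_forest_comp_inj:
  assumes "is_forest A B E" "inj_on L V" "\<forall>e\<in>E. A e \<in> V \<and> B e \<in> V"
  shows "is_forest (L \<circ> A) (L \<circ> B) E"
  unfolding is_forest_def
proof
  fix e assume e: "e \<in> E"
  have ends: "A e \<in> V" "B e \<in> V" "A e \<noteq> B e" "\<not> (edge_rel A B (E - {e}))\<^sup>*\<^sup>* (A e) (B e)"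
    using assms(1,3) e by (auto simp: is_forest_def)
  then have "(L \<circ> A) e \<noteq> (L \<circ> B) e"
    using assms(2) by (simp add: inj_on_eq_iff)
  moreover have "\<not> (edge_rel (L \<circ> A) (L \<circ> B) (E - {e}))\<^sup>*\<^sup>* ((L \<circ> A) e) ((L \<circ> B) e)"
  proof
    assume "(edge_rel (L \<circ> A) (L \<circ> B) (E - {e}))\<^sup>*\<^sup>* ((L \<circ> A) e) ((L \<circ> B) e)"
    then obtain y where "y \<in> V" "L (B e) = L y" "(edge_rel A B (E - {e}))\<^sup>*\<^sup>* (A e) y"
      using rtranclp_edge_rel_comp_lift[OF assms(2), of "E - {e}" A B "A e"] assms(3) ends(1)
      by auto
    then show False
      using ends assms(2) by (simp add: inj_on_eq_iff)
  qed
  ultimately show "(L \<circ> A) e \<noteq> (L \<circ> B) e \<and>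
      \<not> (edge_rel (L \<circ> A) (L \<circ> B) (E - {e}))\<^sup>*\<^sup>* ((L \<circ> A) e) ((L \<circ> B) e)" ..
qed

section \<open>Edges are read off from the coefficients of transpositions\<close>

lemma edge_transp_doubleton: "edge_transp L {u, v} = transpose (L u) (L v)"
  unfolding edge_transp_def
  by (rule the_equality) (auto simp: doubleton_eq_iff transpose_commute)

lemma edge_transp_eq_transpose_iff:
  assumes sg: "simple_graph V E" and inj: "inj_on L V" and xy: "x \<in> V" "y \<in> V" "x \<noteq> y"
  shows "(\<exists>e\<in>E. edge_transp L e = transpose (L x) (L y)) \<longleftrightarrow> {x, y} \<in> E"
proof
  assume "\<exists>e\<in>E. edge_transp L e = transpose (L x) (L y)"
  then obtain e where e: "e \<in> E" "edge_transp L e = transpose (L x) (L y)"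
    by blast
  then obtain u v where uv: "e = {u, v}" "u \<in> V" "v \<in> V"
    using sg unfolding simple_graph_def by blast
  have "L x \<noteq> L y"
    using inj xy by (simp add: inj_on_eq_iff)
  moreover have "transpose (L x) (L y) = transpose (L u) (L v)"
    using e(2) by (simp add: uv(1) edge_transp_doubleton)
  ultimately have "L ` {x, y} = L ` {u, v}"
    using transpose_eq_imp_doubleton_eq by simp
  then have "{x, y} = {u, v}"
    using inj_on_image_eq_iff[OF inj, of "{x, y}" "{u, v}"] xy uv(2,3) by simp
  then show "{x, y} \<in> E"
    using e(1) uv(1) by simp
next
  assume "{x, y} \<in> E"
  then show "\<exists>e\<in>E. edge_transp L e = transpose (L x) (L y)"
    by (intro bexI[of _ "{x, y}"]) (simp_all add: edge_transp_doubleton)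
qed

lemma ga_conj_apply_transpose:
  assumes "\<sigma> \<in> Sn n" "a \<in> {1..n}" "b \<in> {1..n}"
    and "ga_mult n (ga_mult n (ga_of n \<sigma>) x) (ga_of n (inv \<sigma>)) = y"
  shows "y (transpose (\<sigma> a) (\<sigma> b)) = x (transpose a b)"
proof -
  have \<sigma>: "\<sigma> permutes {1..n}"
    using assms(1) by (simp add: Sn_def)
  moreover have "\<sigma> a \<in> {1..n}" "\<sigma> b \<in> {1..n}"
    using permutes_in_image[OF \<sigma>] assms(2,3) by simp_all
  ultimately have "transpose (\<sigma> a) (\<sigma> b) \<in> Sn n"
    by (simp add: Sn_def permutes_swap_id)
  then show ?thesis
    using ga_conj_apply[OF assms(1)] assms(4) inv_comp_transpose_comp[OF permutes_bij[OF \<sigma>]]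
    by auto
qed

lemma K_elem_transpose_nonzero_iff:
  assumes T: "is_tree V E" and L: "is_labeling V n L" and P: "is_edge_ordering E \<pi>"
    and xy: "x \<in> V" "y \<in> V" "x \<noteq> y"
  shows "K_elem n L \<pi> (transpose (L x) (L y)) \<noteq> 0 \<longleftrightarrow> {x, y} \<in> E"
proof -
  have "simple_graph V E"
    using T by (simp add: is_tree_def)
  then obtain A B where AB: "\<forall>e\<in>E. {A e, B e} = e \<and> A e \<noteq> B e \<and> A e \<in> V \<and> B e \<in> V"
    by (rule simple_graph_obtain_ends)
  have inj: "inj_on L V" and im: "L ` V = {1..n}"
    using L by (auto simp: is_labeling_def bij_betw_def)
  have \<tau>: "\<forall>e\<in>E. edge_transp L e = transpose ((L \<circ> A) e) ((L \<circ> B) e)"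
  proof
    fix e assume "e \<in> E"
    then show "edge_transp L e = transpose ((L \<circ> A) e) ((L \<circ> B) e)"
      using AB edge_transp_doubleton[of L "A e" "B e"] by simp
  qed
  have "\<forall>e\<in>E. {A e, B e} = e \<and> A e \<noteq> B e" and "\<forall>e\<in>E. A e \<in> V \<and> B e \<in> V"
    using AB by auto
  then have forest: "is_forest (L \<circ> A) (L \<circ> B) E"
    by (intro is_forest_comp_inj[OF tree_is_forest[OF T] inj])
  have Lxy: "L x \<noteq> L y" "L x \<in> {1..n}" "L y \<in> {1..n}"
    using xy inj im by (auto simp: inj_on_eq_iff)
  have "\<forall>e\<in>set \<pi>. \<exists>a b. a \<noteq> b \<and> a \<in> {1..n} \<and> b \<in> {1..n} \<and> edge_transp L e = transpose a b"
  proof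
    fix e assume "e \<in> set \<pi>"
    then have "e \<in> E"
      using P by (simp add: is_edge_ordering_def)
    then have "L (A e) \<noteq> L (B e)" "L (A e) \<in> {1..n}" "L (B e) \<in> {1..n}"
      using AB inj im by (auto simp: inj_on_eq_iff)
    with \<tau> \<open>e \<in> E\<close> show "\<exists>a b. a \<noteq> b \<and> a \<in> {1..n} \<and> b \<in> {1..n} \<and> edge_transp L e = transpose a b"
      by auto
  qed
  moreover have "transpose (L x) (L y) \<in> Sn n"
    using Lxy by (simp add: Sn_def permutes_swap_id)
  ultimately have "K_elem n L \<pi> (transpose (L x) (L y))
      = of_nat (fact n) * of_int (expansion_coeff (edge_transp L) \<pi> (transpose (L x) (L y)))"
    by (simp add: K_elem_def ga_scale_def prod_one_minus_eq_expansion_coeff)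
  then have "K_elem n L \<pi> (transpose (L x) (L y)) \<noteq> 0
      \<longleftrightarrow> (\<exists>e\<in>E. edge_transp L e = transpose (L x) (L y))"
    using expansion_coeff_transpose_nonzero_iff[OF forest _ _ \<tau> Lxy(1)] P
    by (simp add: is_edge_ordering_def)
  also have "\<dots> \<longleftrightarrow> {x, y} \<in> E"
    using edge_transp_eq_transpose_iff[OF \<open>simple_graph V E\<close> inj xy] .
  finally show ?thesis .
qed

lemma graph_iso_intro:
  assumes "simple_graph V1 E1" "simple_graph V2 E2" "bij_betw f V1 V2"
    and "\<And>x y. x \<in> V1 \<Longrightarrow> y \<in> V1 \<Longrightarrow> x \<noteq> y \<Longrightarrow> {x, y} \<in> E1 \<longleftrightarrow> {f x, f y} \<in> E2"
  shows "graph_iso V1 E1 V2 E2"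
  unfolding graph_iso_def
proof (intro exI conjI ballI)
  show "bij_betw f V1 V2"
    by (fact assms(3))
  fix x y assume "x \<in> V1" "y \<in> V1"
  show "{x, y} \<in> E1 \<longleftrightarrow> {f x, f y} \<in> E2"
  proof (cases "x = y")
    case True
    have "{x} \<notin> E1" "{f x} \<notin> E2"
      using assms(1,2) by (auto simp: simple_graph_def doubleton_eq_iff)
    then show ?thesis
      using True by simp
  next
    case False
    then show ?thesis
      using assms(4) \<open>x \<in> V1\<close> \<open>y \<in> V1\<close> by blast
  qed
qed

lemma relabeling_bij:
  assumes "bij_betw L1 V1 {1..n}" "bij_betw L2 V2 {1..n}" "\<sigma> permutes {1..n}"
  shows "bij_betw (inv_into V2 L2 \<circ> \<sigma> \<circ> L1) V1 V2"
    and "x \<in> V1 \<Longrightarrow> L2 ((inv_into V2 L2 \<circ> \<sigma> \<circ> L1) x) = \<sigma> (L1 x)"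
proof -
  show "bij_betw (inv_into V2 L2 \<circ> \<sigma> \<circ> L1) V1 V2"
    using bij_betw_trans[OF bij_betw_trans[OF assms(1) permutes_imp_bij[OF assms(3)]]
        bij_betw_inv_into[OF assms(2)]]
    by (simp add: o_assoc)
  assume "x \<in> V1"
  then have "\<sigma> (L1 x) \<in> L2 ` V2"
    using assms permutes_in_image[OF assms(3)] by (auto simp: bij_betw_def)
  then show "L2 ((inv_into V2 L2 \<circ> \<sigma> \<circ> L1) x) = \<sigma> (L1 x)"
    by (simp add: f_inv_into_f)
qed

theorem mainTheorem10:
  fixes V1 :: "'a set" and E1 :: "'a set set" and V2 :: "'b set" and E2 :: "'b set set"
    and n :: nat and L1 :: "'a \<Rightarrow> nat" and L2 :: "'b \<Rightarrow> nat"
    and \<pi>1 :: "'a set list" and \<pi>2 :: "'b set list" and \<sigma> :: "nat \<Rightarrow> nat"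
  assumes "is_tree V1 E1" and "is_tree V2 E2"
    and "card V1 = n" and "card V2 = n"
    and "is_labeling V1 n L1" and "is_labeling V2 n L2"
    and "is_edge_ordering E1 \<pi>1" and "is_edge_ordering E2 \<pi>2"
    and "\<sigma> \<in> Sn n"
    and "ga_mult n (ga_mult n (ga_of n \<sigma>) (K_elem n L1 \<pi>1)) (ga_of n (inv \<sigma>))
         = K_elem n L2 \<pi>2"
  shows "graph_iso V1 E1 V2 E2"
proof -
  note T1 = assms(1) and T2 = assms(2) and La = assms(5) and Lb = assms(6)
    and P1 = assms(7) and P2 = assms(8) and \<sigma> = assms(9) and conj = assms(10)
  have bij1: "bij_betw L1 V1 {1..n}" and bij2: "bij_betw L2 V2 {1..n}"
    and \<sigma>_perm: "\<sigma> permutes {1..n}"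
    using La Lb \<sigma> by (auto simp: is_labeling_def Sn_def)
  define f where "f = inv_into V2 L2 \<circ> \<sigma> \<circ> L1"
  have bij_f: "bij_betw f V1 V2" and L2f: "\<And>x. x \<in> V1 \<Longrightarrow> L2 (f x) = \<sigma> (L1 x)"
    unfolding f_def using relabeling_bij[OF bij1 bij2 \<sigma>_perm] by blast+
  have "{x, y} \<in> E1 \<longleftrightarrow> {f x, f y} \<in> E2" if xy: "x \<in> V1" "y \<in> V1" "x \<noteq> y" for x y
  proof -
    have fxy: "f x \<in> V2" "f y \<in> V2" "f x \<noteq> f y"
      using xy bij_f by (auto simp: bij_betw_def inj_on_eq_iff)
    have "{x, y} \<in> E1 \<longleftrightarrow> K_elem n L1 \<pi>1 (transpose (L1 x) (L1 y)) \<noteq> 0"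
      using K_elem_transpose_nonzero_iff[OF T1 La P1 xy] ..
    also have "K_elem n L1 \<pi>1 (transpose (L1 x) (L1 y)) = K_elem n L2 \<pi>2 (transpose (L2 (f x)) (L2 (f y)))"
      using ga_conj_apply_transpose[OF \<sigma> _ _ conj] bij_betw_apply[OF bij1] xy L2f by simp
    also have "\<dots> \<noteq> 0 \<longleftrightarrow> {f x, f y} \<in> E2"
      using K_elem_transpose_nonzero_iff[OF T2 Lb P2 fxy] .
    finally show ?thesis .
  qed
  then show ?thesis
    using T1 T2 bij_f by (intro graph_iso_intro) (auto simp: is_tree_def)
qed

end
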